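(* Let $\mathcal{X}=\langle P,K,V\rangle$ be a polyhedral model. The logical equivalence relation $\equiv$ on $P$ is a simplicial bisimulation.
   Context: A $d$-simplex $\sigma\subseteq\mathbb{R}^m$ is the convex hull of $d+1$ affinely independent points $v_0,\dots,v_d$ (its vertices); the simplexes spanned by subsets of the vertices (including the empty simplex) are its faces, and $\tau\preceq\sigma$ means $\tau$ is a face of $\sigma$. The relative interior of $\sigma$ is $\tilde\sigma=\{\sum_i\lambda_iv_i:\lambda_i\in(0,1],\sum_i\lambda_i=1\}$. A simplicial complex $K$ is a finite set of simplexes of $\mathbb{R}^m$ closed under taking faces and such that the intersection of any two of its simplexes is a face of both. Its polyhedron is $|K|=\bigcup K$, with the subspace topology of $\mathbb{R}^m$; $\mathcal{C}$ and $\mathcal{I}$ denote closure and interior in this space. The cells of $K$ are the sets $\tilde\sigma$ for nonempty $\sigma\in K$; they form a partition $\tilde K$ of $|K|$. A path in a space $P$ is a continuous $\pi:[0,1]\to P$; $\pi(S)=\{\pi(s):s\in S\}$. Fix a finite set $AP$ of atomic propositions. A polyhedral model is $\mathcal{X}=\langle P,K,V\rangle$ with $K$ a simplicial complex, $P=|K|$, and $V:AP\to\mathcal{P}(P)$ such that each $V(p)$ is a union of cells of $K$ ($K$ is then called coherent with the model). SLCS formulas: $\phi::=\top\mid p\mid\neg\phi\mid\phi\wedge\phi\mid\Box\phi\mid\gamma(\phi,\phi)$, $p\in AP$. Semantics at $x\in P$, with $[\![\phi]\!]=\{x\in P:\mathcal{X},x\models\phi\}$: $\top$ always holds; $x\models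 p$ iff $x\in V(p)$; Boolean connectives as usual; $x\models\Box\phi$ iff $x\in\mathcal{I}([\![\phi]\!])$; $x\models\gamma(\phi,\psi)$ iff there is a path $\pi$ in $P$ with $\pi(0)=x$, $\pi((0,1))\subseteq[\![\phi]\!]$ and $\pi(1)\in[\![\psi]\!]$. Logical equivalence $\equiv$ on $P$: $x\equiv y$ iff $x$ and $y$ satisfy exactly the same SLCS formulas. A path $\pi$ is simplicial (w.r.t. $K$) if there are $s_0=0<s_1<\dots<s_k=1$ and cells $\tilde\sigma_1,\dots,\tilde\sigma_k$ of $K$ with $\pi((s_{i-1},s_i))\subseteq\tilde\sigma_i$ for all $i$. For $R\subseteq P\times P$, paths satisfy $\pi_1\hat R\pi_2$ iff $\pi_1(t)\,R\,\pi_2(t)$ for all $t\in[0,1]$. A relation $\sim\subseteq P\times P$ is a simplicial bisimulation if whenever $x\sim y$: (1) for all $p\in AP$, $x\in V(p)\iff y\in V(p)$; (2) for every simplicial path $\pi_x$ with $\pi_x(0)=x$ there is a simplicial path $\pi_y$ with $\pi_y(0)=y$ and $\pi_x\hat\sim\pi_y$; (3) for every simplicial path $\pi_y$ with $\pi_y(0)=y$ there is a simplicial path $\pi_x$ with $\pi_x(0)=x$ and $\pi_x\hat\sim\pi_y$. *)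

theory Defs
  imports "HOL-Analysis.Analysis"
begin

text \<open>Simplexes of a Euclidean space (including the empty simplex), given by
their vertex sets (affinely independent finite sets).\<close>

definition is_simplex :: "'a::euclidean_space set \<Rightarrow> bool" where
  "is_simplex \<sigma> \<longleftrightarrow> (\<exists>C. finite C \<and> \<not> affine_dependent C \<and> \<sigma> = convex hull C)"

definition face_of_simplex :: "'a::euclidean_space set \<Rightarrow> 'a set \<Rightarrow> bool" where
  "face_of_simplex \<tau> \<sigma> \<longleftrightarrow>
     (\<exists>C. finite C \<and> \<not> affine_dependent C \<and> \<sigma> = convex hull C \<and>
          (\<exists>D. D \<subseteq> C \<and> \<tau> = convex hull D))"

definition relint_simplex :: "'a::euclidean_space set \<Rightarrow> 'a set" where
  "relint_simplex \<sigma> = {x. \<exists>C l. finite C \<and> \<not> affine_dependent C \<and> \<sigma> = convex hull C \<and>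
       (\<forall>v\<in>C. 0 < l v \<and> l v \<le> 1) \<and> sum l C = 1 \<and> x = (\<Sum>v\<in>C. l v *\<^sub>R v)}"

definition simplicial_complex :: "'a::euclidean_space set set \<Rightarrow> bool" where
  "simplicial_complex K \<longleftrightarrow> finite K \<and> (\<forall>\<sigma>\<in>K. is_simplex \<sigma>) \<and>
     (\<forall>\<sigma>\<in>K. \<forall>\<tau>. face_of_simplex \<tau> \<sigma> \<longrightarrow> \<tau> \<in> K) \<and>
     (\<forall>\<sigma>\<in>K. \<forall>\<tau>\<in>K. face_of_simplex (\<sigma> \<inter> \<tau>) \<sigma> \<and> face_of_simplex (\<sigma> \<inter> \<tau>) \<tau>)"

definition cells :: "'a::euclidean_space set set \<Rightarrow> 'a set set" where
  "cells K = {relint_simplex \<sigma> | \<sigma>. \<sigma> \<in> K \<and> \<sigma> \<noteq> {}}"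

text \<open>A polyhedral model with polyhedron P = Union K; atomic propositions are the
elements of the finite type 'p.\<close>
definition polyhedral_model :: "'a::euclidean_space set set \<Rightarrow> ('p::finite \<Rightarrow> 'a set) \<Rightarrow> bool" where
  "polyhedral_model K V \<longleftrightarrow> simplicial_complex K \<and> (\<forall>p. \<exists>S\<subseteq>cells K. V p = \<Union>S)"

datatype 'p slcs = Top | Atom 'p | Neg "'p slcs" | And "'p slcs" "'p slcs"
  | Box "'p slcs" | Gamma "'p slcs" "'p slcs"

definition path_in :: "'a::euclidean_space set \<Rightarrow> (real \<Rightarrow> 'a) \<Rightarrow> bool" where
  "path_in P \<pi> \<longleftrightarrow> path \<pi> \<and> path_image \<pi> \<subseteq> P"

fun sem :: "'a::euclidean_space set set \<Rightarrow> ('p \<Rightarrow> 'a set) \<Rightarrow> 'p slcs \<Rightarrow> 'a set" where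
  "sem K V Top = \<Union>K"
| "sem K V (Atom p) = V p"
| "sem K V (Neg \<phi>) = \<Union>K - sem K V \<phi>"
| "sem K V (And \<phi> \<psi>) = sem K V \<phi> \<inter> sem K V \<psi>"
| "sem K V (Box \<phi>) = (top_of_set (\<Union>K)) interior_of (sem K V \<phi>)"
| "sem K V (Gamma \<phi> \<psi>) = {x \<in> \<Union>K. \<exists>\<pi>. path_in (\<Union>K) \<pi> \<and> \<pi> 0 = x \<and>
       \<pi> ` {0<..<1} \<subseteq> sem K V \<phi> \<and> \<pi> 1 \<in> sem K V \<psi>}"

definition logeq :: "'a::euclidean_space set set \<Rightarrow> ('p \<Rightarrow> 'a set) \<Rightarrow> 'a \<Rightarrow> 'a \<Rightarrow> bool" where
  "logeq K V x y \<longleftrightarrow> x \<in> \<Union>K \<and> y \<in> \<Union>K \<and> (\<forall>\<phi>. x \<in> sem K V \<phi> \<longleftrightarrow> y \<in> sem K V \<phi>)"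

definition simplicial_path :: "'a::euclidean_space set set \<Rightarrow> (real \<Rightarrow> 'a) \<Rightarrow> bool" where
  "simplicial_path K \<pi> \<longleftrightarrow> path_in (\<Union>K) \<pi> \<and>
     (\<exists>(k::nat) (s::nat \<Rightarrow> real) \<sigma>. s 0 = 0 \<and> s k = 1 \<and> (\<forall>i<k. s i < s (Suc i)) \<and>
        (\<forall>i\<in>{1..k}. \<sigma> i \<in> K \<and> \<sigma> i \<noteq> {} \<and> \<pi> ` {s (i - 1)<..<s i} \<subseteq> relint_simplex (\<sigma> i)))"

definition simplicial_bisimulation ::
  "'a::euclidean_space set set \<Rightarrow> ('p \<Rightarrow> 'a set) \<Rightarrow> ('a \<Rightarrow> 'a \<Rightarrow> bool) \<Rightarrow> bool" where
  "simplicial_bisimulation K V R \<longleftrightarrow>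
     (\<forall>x y. R x y \<longrightarrow> x \<in> \<Union>K \<and> y \<in> \<Union>K) \<and>
     (\<forall>x y. R x y \<longrightarrow>
        (\<forall>p. x \<in> V p \<longleftrightarrow> y \<in> V p) \<and>
        (\<forall>\<pi>x. simplicial_path K \<pi>x \<and> \<pi>x 0 = x \<longrightarrow>
           (\<exists>\<pi>y. simplicial_path K \<pi>y \<and> \<pi>y 0 = y \<and> (\<forall>t\<in>{0..1}. R (\<pi>x t) (\<pi>y t)))) \<and>
        (\<forall>\<pi>y. simplicial_path K \<pi>y \<and> \<pi>y 0 = y \<longrightarrow>
           (\<exists>\<pi>x. simplicial_path K \<pi>x \<and> \<pi>x 0 = x \<and> (\<forall>t\<in>{0..1}. R (\<pi>x t) (\<pi>y t)))))"

end

theory Submission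
  imports Defs
begin

(* Every SLCS formula denotes a union of cells: cell-invariance is preserved by the interior
   operator and by the reachability operator gamma, because a neighbourhood of a point of a cell
   only meets the cells of the simplices having that cell as a face (the open star). With finitely
   many cells, each logical equivalence class is then defined by a single characteristic formula.
   A simplicial path from x runs, between consecutive break points, inside single cells. For the
   first piece, inside the cell of c, x satisfies gamma(chi c, chi e) with e the end of the piece,
   hence so does every y equivalent to x; the witnessing path from y can be straightened into a
   simplicial path staying in the class of c, since the cells visited by a path inside a
   cell-invariant set are linked through the face-incidence graph of the complex. Gluing these
   pieces at the break points of the original path gives the required matching path. *)

section \<open>Simplices and their cells\<close>

lemma relint_simplex_subset: "relint_simplex \<sigma> \<subseteq> \<sigma>"
proof
  fix z assume "z \<in> relint_simplex \<sigma>"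
  then obtain C l where C: "finite C" "\<sigma> = convex hull C" "\<forall>v\<in>C. 0 < l v \<and> l v \<le> 1"
    "sum l C = 1" "z = (\<Sum>v\<in>C. l v *\<^sub>R v)" unfolding relint_simplex_def by blast
  then show "z \<in> \<sigma>" by (auto simp: convex_hull_finite intro!: exI[of _ l] less_imp_le)
qed

lemma relint_simplex_in_polyhedron: "\<sigma> \<in> K \<Longrightarrow> x \<in> relint_simplex \<sigma> \<Longrightarrow> x \<in> \<Union>K"
  using relint_simplex_subset by blast

lemma relint_simplex_convex_combination:
  assumes q: "q \<in> relint_simplex \<rho>" and p: "p \<in> \<rho>" and t: "0 < t" "t \<le> 1"
  shows "(1 - t) *\<^sub>R p + t *\<^sub>R q \<in> relint_simplex \<rho>"
proof -
  obtain C l where C: "finite C" "\<not> affine_dependent C" "\<rho> = convex hull C"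
    "\<forall>v\<in>C. 0 < l v \<and> l v \<le> 1" "sum l C = 1" "q = (\<Sum>v\<in>C. l v *\<^sub>R v)"
    using q unfolding relint_simplex_def by blast
  obtain a where a: "\<forall>v\<in>C. 0 \<le> a v" "sum a C = 1" "p = (\<Sum>v\<in>C. a v *\<^sub>R v)"
    using p C(1,3) by (auto simp: convex_hull_finite)
  define m where "m v = (1 - t) * a v + t * l v" for v
  have pos: "\<forall>v\<in>C. 0 < m v" using a C t unfolding m_def
    by (metis add_nonneg_pos diff_ge_0_iff_ge mult_nonneg_nonneg mult_pos_pos)
  have sum: "sum m C = 1" unfolding m_def using a C
    by (simp add: sum.distrib sum_distrib_left[symmetric])
  have "\<forall>v\<in>C. m v \<le> 1"
  proof
    fix v assume "v \<in> C"
    then have "m v \<le> sum m C" using pos C(1) by (intro member_le_sum) (auto simp: less_imp_le)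
    then show "m v \<le> 1" using sum by simp
  qed
  moreover have "(1 - t) *\<^sub>R p + t *\<^sub>R q = (\<Sum>v\<in>C. m v *\<^sub>R v)"
    unfolding m_def a(3) C(6) by (simp add: scaleR_sum_right sum.distrib scaleR_add_left)
  ultimately show ?thesis unfolding relint_simplex_def using C pos sum by blast
qed

lemma simplicial_complex_simplex: "simplicial_complex K \<Longrightarrow> \<sigma> \<in> K \<Longrightarrow> is_simplex \<sigma>"
  by (simp add: simplicial_complex_def)

lemma convex_simplex: "is_simplex \<sigma> \<Longrightarrow> convex \<sigma>"
  unfolding is_simplex_def by (auto intro: convex_convex_hull)

lemma closed_simplex: "is_simplex \<sigma> \<Longrightarrow> closed \<sigma>"
  unfolding is_simplex_def by (auto intro: compact_imp_closed compact_convex_hull finite_imp_compact)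

lemma relint_simplex_nonempty:
  assumes "is_simplex \<rho>" "\<rho> \<noteq> {}" shows "relint_simplex \<rho> \<noteq> {}"
proof -
  obtain C where C: "finite C" "\<not> affine_dependent C" "\<rho> = convex hull C"
    using assms unfolding is_simplex_def by blast
  then have "card C > 0" using assms by (auto simp: card_gt_0_iff)
  then have "(\<Sum>v\<in>C. (1 / real (card C)) *\<^sub>R v) \<in> relint_simplex \<rho>"
    unfolding relint_simplex_def using C by (auto intro!: exI[of _ C] exI[of _ "\<lambda>_. 1 / real (card C)"])
  then show ?thesis by blast
qed

lemma affine_independent_convex_hull_eq:
  fixes C :: "'a::euclidean_space set"
  assumes "\<not> affine_dependent C" "\<not> affine_dependent C'" "convex hull C = convex hull C'"
  shows "C = C'"
proof (rule set_eqI)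
  fix x
  have "x \<in> C \<longleftrightarrow> x extreme_point_of (convex hull C)"
    using extreme_point_of_convex_hull_affine_independent[OF assms(1)] by simp
  also have "\<dots> \<longleftrightarrow> x \<in> C'"
    using extreme_point_of_convex_hull_affine_independent[OF assms(2)] assms(3) by simp
  finally show "x \<in> C \<longleftrightarrow> x \<in> C'" .
qed

text \<open>A point of the relative interior of a simplex of the complex has all barycentric
  coordinates positive, so any simplex of the complex containing it contains every vertex.\<close>

lemma relint_simplex_subset_simplex:
  assumes K: "simplicial_complex K" and \<tau>: "\<tau> \<in> K" and \<sigma>: "\<sigma> \<in> K"
    and z: "z \<in> relint_simplex \<tau>" and z\<sigma>: "z \<in> \<sigma>"
  shows "\<tau> \<subseteq> \<sigma>"
proof -
  obtain C l where C: "finite C" "\<not> affine_dependent C" "\<tau> = convex hull C"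
    "\<forall>v\<in>C. 0 < l v \<and> l v \<le> 1" "sum l C = 1" "z = (\<Sum>v\<in>C. l v *\<^sub>R v)"
    using z unfolding relint_simplex_def by blast
  have "face_of_simplex (\<sigma> \<inter> \<tau>) \<tau>" using K \<tau> \<sigma> unfolding simplicial_complex_def by blast
  then obtain C' D where C': "\<not> affine_dependent C'" "\<tau> = convex hull C'" "D \<subseteq> C'"
    "\<sigma> \<inter> \<tau> = convex hull D" unfolding face_of_simplex_def by blast
  have DC: "D \<subseteq> C" using affine_independent_convex_hull_eq[OF C'(1) C(2)] C'(2,3) C(3) by simp
  have fD: "finite D" using C(1) DC finite_subset by blast
  have "z \<in> convex hull D" using z z\<sigma> C'(4) relint_simplex_subset by blast
  then obtain m where m: "\<forall>v\<in>D. 0 \<le> m v" "sum m D = 1" "z = (\<Sum>v\<in>D. m v *\<^sub>R v)"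
    using fD by (auto simp: convex_hull_finite)
  have "C \<subseteq> D"
  proof
    fix w assume wC: "w \<in> C"
    show "w \<in> D"
    proof (rule ccontr)
      assume wD: "w \<notin> D"
      define U where "U v = l v - (if v \<in> D then m v else 0)" for v
      have "(\<Sum>v\<in>C. (if v \<in> D then m v else 0) *\<^sub>R v) = (\<Sum>v\<in>C. if v \<in> D then m v *\<^sub>R v else 0)"
        by (rule sum.cong) auto
      also have "\<dots> = (\<Sum>v\<in>D. m v *\<^sub>R v)" using C(1) DC by (simp add: sum.If_cases Int_absorb1)
      finally have "(\<Sum>v\<in>C. U v *\<^sub>R v) = 0"
        unfolding U_def using C(6) m(3) by (simp add: scaleR_diff_left sum_subtractf)
      moreover have "sum U C = 0"
        using C(1,5) DC m(2) by (simp add: U_def sum_subtractf sum.If_cases Int_absorb1)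
      moreover have "U w \<noteq> 0" using wD wC C(4) by (auto simp: U_def)
      ultimately show False
        using C(2) wC unfolding affine_dependent_explicit_finite[OF C(1)] by blast
    qed
  qed
  then show ?thesis using C(3) C'(4) hull_mono by blast
qed

lemma relint_simplex_unique:
  assumes "simplicial_complex K" "\<tau> \<in> K" "\<rho> \<in> K"
    and "z \<in> relint_simplex \<tau>" "z \<in> relint_simplex \<rho>"
  shows "\<tau> = \<rho>"
proof (rule subset_antisym)
  show "\<tau> \<subseteq> \<rho>" using relint_simplex_subset_simplex[OF assms(1,2,3,4)] assms(5) relint_simplex_subset by blast
  show "\<rho> \<subseteq> \<tau>" using relint_simplex_subset_simplex[OF assms(1,3,2,5)] assms(4) relint_simplex_subset by blast
qed

lemma polyhedron_in_relint_simplex: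
  assumes K: "simplicial_complex K" and z: "z \<in> \<Union>K"
  obtains \<rho> where "\<rho> \<in> K" "\<rho> \<noteq> {}" "z \<in> relint_simplex \<rho>"
proof -
  obtain \<sigma> where \<sigma>: "\<sigma> \<in> K" "z \<in> \<sigma>" using z by blast
  then obtain C where C: "finite C" "\<not> affine_dependent C" "\<sigma> = convex hull C"
    using K unfolding simplicial_complex_def is_simplex_def by blast
  obtain a where a: "\<forall>v\<in>C. 0 \<le> a v" "sum a C = 1" "z = (\<Sum>v\<in>C. a v *\<^sub>R v)"
    using \<sigma>(2) C by (auto simp: convex_hull_finite)
  define D where "D = {v\<in>C. a v \<noteq> 0}"
  have DC: "D \<subseteq> C" and fD: "finite D" using C(1) by (auto simp: D_def)
  have z0: "\<forall>v\<in>C - D. a v = 0" by (simp add: D_def)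
  have sD: "sum a D = 1" using a(2) sum.mono_neutral_right[OF C(1) DC, of a] z0 by simp
  have zD: "z = (\<Sum>v\<in>D. a v *\<^sub>R v)"
    using a(3) sum.mono_neutral_right[OF C(1) DC, of "\<lambda>v. a v *\<^sub>R v"] z0 by simp
  have "face_of_simplex (convex hull D) \<sigma>"
    unfolding face_of_simplex_def using C DC by (intro exI[of _ C]) auto
  then have "convex hull D \<in> K" using K \<sigma>(1) unfolding simplicial_complex_def by blast
  moreover have "\<forall>v\<in>D. 0 < a v \<and> a v \<le> 1"
  proof
    fix v assume v: "v \<in> D"
    have "a v \<le> sum a D" using v fD a(1) DC by (intro member_le_sum) auto
    then show "0 < a v \<and> a v \<le> 1" using v a(1) sD by (force simp: D_def)
  qed
  then have "z \<in> relint_simplex (convex hull D)"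
    unfolding relint_simplex_def using fD affine_independent_subset[OF C(2) DC] sD zD by blast
  moreover have "convex hull D \<noteq> {}" using sD by auto
  ultimately show ?thesis using that by blast
qed

text \<open>The union of the simplices not containing \<open>\<tau>\<close> is closed and misses the cell of \<open>\<tau>\<close>.\<close>

lemma open_star:
  assumes K: "simplicial_complex K" and \<tau>: "\<tau> \<in> K" and z: "z \<in> relint_simplex \<tau>"
  obtains e where "e > 0"
    "\<And>w. w \<in> \<Union>K \<Longrightarrow> dist w z < e \<Longrightarrow> \<exists>\<rho>\<in>K. \<tau> \<subseteq> \<rho> \<and> w \<in> relint_simplex \<rho>"
proof -
  define B where "B = \<Union>{\<sigma>\<in>K. \<not> \<tau> \<subseteq> \<sigma>}"
  have "closed B"
    using K unfolding B_def simplicial_complex_def by (intro closed_Union) (auto intro: closed_simplex)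
  moreover have "z \<notin> B" unfolding B_def using relint_simplex_subset_simplex[OF K \<tau> _ z] by blast
  ultimately obtain e where e: "e > 0" "ball z e \<subseteq> - B"
    by (metis ComplI open_Compl open_contains_ball)
  show ?thesis
  proof (rule that[OF e(1)])
    fix w assume w: "w \<in> \<Union>K" "dist w z < e"
    obtain \<rho> where \<rho>: "\<rho> \<in> K" "w \<in> relint_simplex \<rho>" using polyhedron_in_relint_simplex[OF K w(1)] by blast
    have "w \<in> ball z e" using w(2) by (simp add: dist_commute)
    then have "w \<notin> B" using e(2) by blast
    then have "\<tau> \<subseteq> \<rho>" using \<rho> relint_simplex_subset unfolding B_def by blast
    then show "\<exists>\<rho>\<in>K. \<tau> \<subseteq> \<rho> \<and> w \<in> relint_simplex \<rho>" using \<rho> by blast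
  qed
qed

section \<open>Paths in the polyhedron\<close>

lemma path_in_imp_in: "path_in P \<pi> \<Longrightarrow> t \<in> {0..1} \<Longrightarrow> \<pi> t \<in> P"
  unfolding path_in_def path_image_def by blast

lemma path_in_subpath:
  "path_in P \<pi> \<Longrightarrow> u \<in> {0..1} \<Longrightarrow> v \<in> {0..1} \<Longrightarrow> path_in P (subpath u v \<pi>)"
  unfolding path_in_def by (meson path_image_subpath_subset path_subpath subset_trans)

lemma path_in_reversepath: "path_in P \<pi> \<Longrightarrow> path_in P (reversepath \<pi>)"
  by (simp add: path_in_def)

lemma path_in_linepath: "convex S \<Longrightarrow> S \<subseteq> P \<Longrightarrow> p \<in> S \<Longrightarrow> q \<in> S \<Longrightarrow> path_in P (linepath p q)"
  using closed_segment_subset[of p S q] by (auto simp: path_in_def)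

lemma subpath_image_greaterThanLessThan:
  assumes "u < v"
  shows "subpath u v \<pi> ` {0<..<1} \<subseteq> \<pi> ` {u<..<v}"
proof
  fix z assume "z \<in> subpath u v \<pi> ` {0<..<1}"
  then obtain t where t: "0 < t" "t < 1" "z = \<pi> ((v - u) * t + u)" by (auto simp: subpath_def)
  have "0 < (v - u) * t" "(v - u) * t < v - u" using assms t by simp_all
  then have "(v - u) * t + u \<in> {u<..<v}" by simp
  then show "z \<in> \<pi> ` {u<..<v}" using t(3) by blast
qed

text \<open>Concatenation of two paths with the junction at time \<open>a\<close> instead of \<open>1/2\<close>: this lets
  a path be rebuilt piece by piece on the time scale of another one.\<close>

definition join_at :: "real \<Rightarrow> (real \<Rightarrow> 'a) \<Rightarrow> (real \<Rightarrow> 'a) \<Rightarrow> real \<Rightarrow> 'a" where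
  "join_at a f g t = (if t \<le> a then f (t / a) else g ((t - a) / (1 - a)))"

lemma join_at_0 [simp]: "0 < a \<Longrightarrow> join_at a f g 0 = f 0"
  by (simp add: join_at_def)

lemma join_at_1 [simp]: "a < 1 \<Longrightarrow> join_at a f g 1 = g 1"
  by (simp add: join_at_def)

lemma path_join_at:
  fixes f g :: "real \<Rightarrow> 'a::real_normed_vector"
  assumes a: "0 < a" "a < 1" and f: "path f" and g: "path g" and fg: "f 1 = g 0"
  shows "path (join_at a f g)"
proof -
  have "continuous_on {0..1} (\<lambda>t. if t \<le> a then f (t / a) else g ((t - a) / (1 - a)))"
  proof (rule continuous_on_cases_le[where h="\<lambda>t. t"])
    show "continuous_on {t \<in> {0..1}. t \<le> a} (\<lambda>t. f (t / a))"
      using f a unfolding path_def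
      by (intro continuous_on_compose2[of "{0..1}" f _ "\<lambda>t. t / a"])
         (auto intro!: continuous_intros simp: divide_simps)
    show "continuous_on {t \<in> {0..1}. a \<le> t} (\<lambda>t. g ((t - a) / (1 - a)))"
      using g a unfolding path_def
      by (intro continuous_on_compose2[of "{0..1}" g _ "\<lambda>t. (t - a) / (1 - a)"])
         (auto intro!: continuous_intros simp: divide_simps)
  qed (use a fg in \<open>auto intro!: continuous_intros\<close>)
  then show ?thesis unfolding path_def join_at_def[abs_def] .
qed

lemma join_at_image:
  assumes "0 < a" "a < 1"
  shows "join_at a f g ` {0..1} \<subseteq> f ` {0..1} \<union> g ` {0..1}"
proof
  fix z assume "z \<in> join_at a f g ` {0..1}"
  then obtain t where t: "t \<in> {0..1}" "z = join_at a f g t" by blast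
  show "z \<in> f ` {0..1} \<union> g ` {0..1}"
  proof (cases "t \<le> a")
    case True
    then have "t / a \<in> {0..1}" using assms t by (auto simp: divide_simps)
    then show ?thesis using True t by (auto simp: join_at_def)
  next
    case False
    then have "(t - a) / (1 - a) \<in> {0..1}" using assms t by (auto simp: divide_simps)
    then show ?thesis using False t by (auto simp: join_at_def)
  qed
qed

lemma join_at_image_open:
  assumes "0 < a" "a < 1"
  shows "join_at a f g ` {0<..<1} \<subseteq> f ` {0<..1} \<union> g ` {0<..<1}"
proof
  fix z assume "z \<in> join_at a f g ` {0<..<1}"
  then obtain t where t: "t \<in> {0<..<1}" "z = join_at a f g t" by blast
  show "z \<in> f ` {0<..1} \<union> g ` {0<..<1}"
  proof (cases "t \<le> a")
    case True
    then have "t / a \<in> {0<..1}" using assms t by (auto simp: divide_simps)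
    then show ?thesis using True t by (auto simp: join_at_def)
  next
    case False
    then have "(t - a) / (1 - a) \<in> {0<..<1}" using assms t by (auto simp: divide_simps)
    then show ?thesis using False t by (auto simp: join_at_def)
  qed
qed

lemma path_in_join_at:
  fixes f g :: "real \<Rightarrow> 'a::euclidean_space"
  assumes "0 < a" "a < 1" "path_in P f" "path_in P g" "f 1 = g 0"
  shows "path_in P (join_at a f g)"
proof -
  have "join_at a f g ` {0..1} \<subseteq> P"
    using join_at_image[OF assms(1,2), of f g] assms(3,4) by (auto simp: path_in_def path_image_def)
  moreover have "path f" "path g" using assms(3,4) by (simp_all add: path_in_def)
  then have "path (join_at a f g)" using path_join_at assms(1,2,5) by blast
  ultimately show ?thesis by (simp add: path_in_def path_image_def)
qed

lemma join_at_subpaths: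
  assumes "0 < a" "a < 1"
  shows "join_at a (subpath 0 a \<pi>) (subpath a 1 \<pi>) = \<pi>"
proof
  fix t
  have "(1 - a) * ((t - a) / (1 - a)) + a = t" "a * (t / a) = t" using assms by simp_all
  then show "join_at a (subpath 0 a \<pi>) (subpath a 1 \<pi>) t = \<pi> t"
    by (simp add: join_at_def subpath_def)
qed

lemma join_at_rel:
  assumes "0 < a" "a < 1"
    and "\<forall>t\<in>{0..1}. R (f t) (f' t)" and "\<forall>t\<in>{0..1}. R (g t) (g' t)"
  shows "\<forall>t\<in>{0..1}. R (join_at a f g t) (join_at a f' g' t)"
proof
  fix t :: real assume t: "t \<in> {0..1}"
  show "R (join_at a f g t) (join_at a f' g' t)"
  proof (cases "t \<le> a")
    case True
    then have "t / a \<in> {0..1}" using assms t by (auto simp: divide_simps)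
    then show ?thesis using True assms(3) by (simp add: join_at_def)
  next
    case False
    then have "(t - a) / (1 - a) \<in> {0..1}" using assms t by (auto simp: divide_simps)
    then show ?thesis using False assms(4) by (simp add: join_at_def)
  qed
qed

lemma path_locally_in_star:
  assumes K: "simplicial_complex K" and \<pi>: "path_in (\<Union>K) \<pi>" and t: "t \<in> {0..1}"
    and \<rho>: "\<rho> \<in> K" "\<pi> t \<in> relint_simplex \<rho>"
  obtains d where "d > 0"
    "\<And>t'. t' \<in> {0..1} \<Longrightarrow> dist t' t < d \<Longrightarrow> \<exists>\<rho>'\<in>K. \<rho> \<subseteq> \<rho>' \<and> \<pi> t' \<in> relint_simplex \<rho>'"
proof -
  obtain e where e: "e > 0"
    "\<And>w. w \<in> \<Union>K \<Longrightarrow> dist w (\<pi> t) < e \<Longrightarrow> \<exists>\<rho>'\<in>K. \<rho> \<subseteq> \<rho>' \<and> w \<in> relint_simplex \<rho>'"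
    using open_star[OF K \<rho>] by blast
  have "continuous_on {0..1} \<pi>" using \<pi> by (simp add: path_in_def path_def)
  then obtain d where d: "d > 0" "\<forall>t'\<in>{0..1}. dist t' t < d \<longrightarrow> dist (\<pi> t') (\<pi> t) < e"
    using t e(1) unfolding continuous_on_iff by blast
  show ?thesis
  proof (rule that[OF d(1)])
    fix t' assume t': "t' \<in> {0..1}" "dist t' t < d"
    show "\<exists>\<rho>'\<in>K. \<rho> \<subseteq> \<rho>' \<and> \<pi> t' \<in> relint_simplex \<rho>'"
      using d(2) t' by (intro e(2) path_in_imp_in[OF \<pi>]) auto
  qed
qed

lemma path_enters_star:
  assumes K: "simplicial_complex K" and \<pi>: "path_in (\<Union>K) \<pi>"
    and \<tau>: "\<tau> \<in> K" "\<pi> 0 \<in> relint_simplex \<tau>"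
  obtains t \<rho> where "t \<in> {0<..<1}" "\<rho> \<in> K" "\<tau> \<subseteq> \<rho>" "\<pi> t \<in> relint_simplex \<rho>"
proof -
  have "0 \<in> {0..1::real}" by simp
  then obtain d where d: "d > 0"
    "\<And>t'. t' \<in> {0..1} \<Longrightarrow> dist t' 0 < d \<Longrightarrow> \<exists>\<rho>'\<in>K. \<tau> \<subseteq> \<rho>' \<and> \<pi> t' \<in> relint_simplex \<rho>'"
    using path_locally_in_star[OF K \<pi> _ \<tau>] by blast
  define t where "t = min (d / 2) (1 / 2)"
  have t: "t \<in> {0<..<1}" "dist t 0 < d" using d(1) by (auto simp: t_def)
  then obtain \<rho> where "\<rho> \<in> K" "\<tau> \<subseteq> \<rho>" "\<pi> t \<in> relint_simplex \<rho>" using d(2)[of t] by auto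
  with t(1) show ?thesis by (rule that)
qed

lemma path_ends_in_stars:
  assumes K: "simplicial_complex K" and \<pi>: "path_in (\<Union>K) \<pi>"
  obtains t0 \<rho>0 t1 \<rho>1 where "t0 \<in> {0<..<1}" "\<rho>0 \<in> K" "\<pi> 0 \<in> \<rho>0" "\<pi> t0 \<in> relint_simplex \<rho>0"
    "t1 \<in> {0<..<1}" "\<rho>1 \<in> K" "\<pi> 1 \<in> \<rho>1" "\<pi> t1 \<in> relint_simplex \<rho>1"
proof -
  have "0 \<in> {0..1::real}" "1 \<in> {0..1::real}" by simp_all
  then obtain \<tau>0 \<tau>1 where \<tau>0: "\<tau>0 \<in> K" "\<pi> 0 \<in> relint_simplex \<tau>0"
    and \<tau>1: "\<tau>1 \<in> K" "\<pi> 1 \<in> relint_simplex \<tau>1"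
    using polyhedron_in_relint_simplex[OF K path_in_imp_in[OF \<pi>]] by metis
  obtain t0 \<rho>0 where t0: "t0 \<in> {0<..<1}" and \<rho>0: "\<rho>0 \<in> K" "\<tau>0 \<subseteq> \<rho>0" "\<pi> t0 \<in> relint_simplex \<rho>0"
    using path_enters_star[OF K \<pi> \<tau>0] by blast
  obtain t1 \<rho>1 where t1: "t1 \<in> {0<..<1}"
    and \<rho>1: "\<rho>1 \<in> K" "\<tau>1 \<subseteq> \<rho>1" "reversepath \<pi> t1 \<in> relint_simplex \<rho>1"
    using path_enters_star[OF K path_in_reversepath[OF \<pi>] \<tau>1(1)] \<tau>1(2)
    by (auto simp: reversepath_def)
  have "1 - t1 \<in> {0<..<1}" "\<pi> (1 - t1) \<in> relint_simplex \<rho>1"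
    using t1 \<rho>1(3) by (auto simp: reversepath_def)
  moreover have "\<pi> 0 \<in> \<rho>0" "\<pi> 1 \<in> \<rho>1"
    using \<tau>0(2) \<rho>0(2) \<tau>1(2) \<rho>1(2) relint_simplex_subset by blast+
  ultimately show ?thesis using that[OF t0 \<rho>0(1) _ \<rho>0(3) _ \<rho>1(1)] by blast
qed

section \<open>Simplicial paths\<close>

definition cell_partition ::
  "'a::euclidean_space set set \<Rightarrow> (real \<Rightarrow> 'a) \<Rightarrow> nat \<Rightarrow> (nat \<Rightarrow> real) \<Rightarrow> (nat \<Rightarrow> 'a set) \<Rightarrow> bool" where
  "cell_partition K \<pi> k s \<sigma> \<longleftrightarrow> s 0 = 0 \<and> s k = 1 \<and> (\<forall>i<k. s i < s (Suc i)) \<and>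
     (\<forall>i\<in>{1..k}. \<sigma> i \<in> K \<and> \<sigma> i \<noteq> {} \<and> \<pi> ` {s (i - 1)<..<s i} \<subseteq> relint_simplex (\<sigma> i))"

lemma simplicial_path_iff_cell_partition:
  "simplicial_path K \<pi> \<longleftrightarrow> path_in (\<Union>K) \<pi> \<and> (\<exists>k s \<sigma>. cell_partition K \<pi> k s \<sigma>)"
  unfolding simplicial_path_def cell_partition_def by (rule refl)

lemma cell_partition_le:
  assumes "cell_partition K \<pi> k s \<sigma>" "i \<le> j" "j \<le> k"
  shows "s i \<le> s j"
proof -
  have "s n \<le> s (Suc n)" if "n \<in> {..<k}" for n
    using assms(1) that by (simp add: cell_partition_def less_imp_le)
  moreover have "{i..<j} \<subseteq> {..<k}" using assms(3) by auto
  ultimately show ?thesis using lift_Suc_mono_le_ivl assms(2) by blast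
qed

lemma cell_partition_bounds:
  assumes "cell_partition K \<pi> k s \<sigma>" "i \<le> k"
  shows "0 \<le> s i" "s i \<le> 1"
proof -
  have "s 0 = 0" "s k = 1" using assms(1) by (simp_all add: cell_partition_def)
  then show "0 \<le> s i" "s i \<le> 1"
    using cell_partition_le[OF assms(1), of 0 i] cell_partition_le[OF assms(1), of i k] assms(2) by simp_all
qed

lemma cell_partition_first_piece:
  assumes "cell_partition K \<pi> (Suc k) s \<sigma>"
  shows "0 < s 1" "s 1 \<le> 1" "\<sigma> 1 \<in> K" "\<pi> ` {0<..<s 1} \<subseteq> relint_simplex (\<sigma> 1)"
proof -
  have "s 0 = 0" "s 0 < s 1" using assms by (auto simp: cell_partition_def)
  then show "0 < s 1" by simp
  have "\<forall>i\<in>{1..Suc k}. \<sigma> i \<in> K \<and> \<pi> ` {s (i - 1)<..<s i} \<subseteq> relint_simplex (\<sigma> i)"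
    using assms unfolding cell_partition_def by blast
  then have "\<sigma> 1 \<in> K \<and> \<pi> ` {s (1 - 1)<..<s 1} \<subseteq> relint_simplex (\<sigma> 1)" by (rule bspec) simp
  then show "\<sigma> 1 \<in> K" "\<pi> ` {0<..<s 1} \<subseteq> relint_simplex (\<sigma> 1)" using \<open>s 0 = 0\<close> by simp_all
  show "s 1 \<le> 1" using cell_partition_bounds(2)[OF assms, of 1] by simp
qed

lemma cell_partition_tail:
  assumes P: "cell_partition K \<pi> (Suc k) s \<sigma>" and k: "0 < k"
  shows "s 1 < 1"
    and "cell_partition K (subpath (s 1) 1 \<pi>) k (\<lambda>i. (s (Suc i) - s 1) / (1 - s 1)) (\<lambda>i. \<sigma> (Suc i))"
      (is "cell_partition K ?r k ?s' ?\<sigma>'")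
proof -
  have s0: "s 0 = 0" and sk: "s (Suc k) = 1" and mono: "\<forall>i<Suc k. s i < s (Suc i)"
    and pieces: "\<forall>i\<in>{1..Suc k}. \<sigma> i \<in> K \<and> \<sigma> i \<noteq> {} \<and> \<pi> ` {s (i - 1)<..<s i} \<subseteq> relint_simplex (\<sigma> i)"
    using P unfolding cell_partition_def by blast+
  have "s 1 < s 2" using mono k by (simp add: numeral_2_eq_2)
  moreover have "s 2 \<le> 1" using cell_partition_bounds(2)[OF P, of 2] k by simp
  ultimately show s1: "s 1 < 1" by simp
  have "?s' 0 = 0" "?s' k = 1" using s1 sk by simp_all
  moreover have "?s' i < ?s' (Suc i)" if "i < k" for i
    using mono that s1 by (simp add: divide_strict_right_mono)
  moreover have "?\<sigma>' i \<in> K \<and> ?\<sigma>' i \<noteq> {} \<and> ?r ` {?s' (i - 1)<..<?s' i} \<subseteq> relint_simplex (?\<sigma>' i)"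
    if i: "i \<in> {1..k}" for i
  proof -
    have P: "\<sigma> (Suc i) \<in> K" "\<sigma> (Suc i) \<noteq> {}" "\<pi> ` {s i<..<s (Suc i)} \<subseteq> relint_simplex (\<sigma> (Suc i))"
      using pieces i by (metis atLeastAtMost_iff diff_Suc_1 le_add1 plus_1_eq_Suc Suc_le_mono)+
    have "?r u \<in> relint_simplex (\<sigma> (Suc i))" if u: "?s' (i - 1) < u" "u < ?s' i" for u
    proof -
      have "Suc (i - 1) = i" using i by auto
      then have "(s i - s 1) / (1 - s 1) < u" "u < (s (Suc i) - s 1) / (1 - s 1)" using u by simp_all
      then have "s i - s 1 < (1 - s 1) * u" "(1 - s 1) * u < s (Suc i) - s 1" using s1
        by (simp_all add: divide_less_eq less_divide_eq mult.commute)
      then have "(1 - s 1) * u + s 1 \<in> {s i<..<s (Suc i)}" by auto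
      then show ?thesis using P(3) by (auto simp: subpath_def)
    qed
    then show ?thesis using P(1,2) by auto
  qed
  ultimately show "cell_partition K ?r k ?s' ?\<sigma>'" unfolding cell_partition_def by blast
qed

lemma simplicial_path_single_cell:
  assumes "path_in (\<Union>K) \<pi>" "\<rho> \<in> K" "\<rho> \<noteq> {}" "\<pi> ` {0<..<1} \<subseteq> relint_simplex \<rho>"
  shows "simplicial_path K \<pi>"
proof -
  have "cell_partition K \<pi> 1 real (\<lambda>_. \<rho>)"
    unfolding cell_partition_def using assms(2-4) by (simp add: atLeastAtMost_singleton)
  then show ?thesis using assms(1) unfolding simplicial_path_iff_cell_partition by blast
qed

lemma linepath_image_relint_simplex:
  assumes "p \<in> \<rho>" "q \<in> \<rho>" "p \<in> relint_simplex \<rho> \<or> q \<in> relint_simplex \<rho>"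
  shows "linepath p q ` {0<..<1} \<subseteq> relint_simplex \<rho>"
proof
  fix z assume "z \<in> linepath p q ` {0<..<1}"
  then obtain t where t: "0 < t" "t < 1" "z = (1 - t) *\<^sub>R p + t *\<^sub>R q"
    by (auto simp: linepath_def)
  show "z \<in> relint_simplex \<rho>"
    using assms(3)
  proof
    assume "q \<in> relint_simplex \<rho>"
    then show ?thesis using relint_simplex_convex_combination[OF _ assms(1), of q t] t by simp
  next
    assume "p \<in> relint_simplex \<rho>"
    then have "(1 - (1 - t)) *\<^sub>R q + (1 - t) *\<^sub>R p \<in> relint_simplex \<rho>"
      using relint_simplex_convex_combination[OF _ assms(2), of p "1 - t"] t by simp
    then show ?thesis using t(3) by (simp add: add.commute)
  qed
qed

lemma simplicial_path_linepath:
  assumes K: "simplicial_complex K" and "\<rho> \<in> K" "p \<in> \<rho>" "q \<in> \<rho>"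
    and "p \<in> relint_simplex \<rho> \<or> q \<in> relint_simplex \<rho>"
  shows "simplicial_path K (linepath p q)"
proof (rule simplicial_path_single_cell)
  have "convex \<rho>" using convex_simplex simplicial_complex_simplex[OF K assms(2)] .
  then show "path_in (\<Union>K) (linepath p q)" using assms(2-4) by (intro path_in_linepath) auto
  show "\<rho> \<noteq> {}" using assms(3) by blast
qed (use assms(2) linepath_image_relint_simplex[OF assms(3-5)] in simp_all)

lemma join_at_image_first:
  assumes "0 < a" "v \<le> 1" "f ` {u<..<v} \<subseteq> X"
  shows "join_at a f g ` {a * u<..<a * v} \<subseteq> X"
proof
  fix z assume "z \<in> join_at a f g ` {a * u<..<a * v}"
  then obtain t where t: "a * u < t" "t < a * v" "z = join_at a f g t" by auto
  have "t \<le> a" using t(2) assms(1,2) by (smt (verit) mult_left_le)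
  then have "z = f (t / a)" using t(3) by (simp add: join_at_def)
  moreover have "t / a \<in> {u<..<v}" using t(1,2) assms(1) by (auto simp: field_simps)
  ultimately show "z \<in> X" using assms(3) by blast
qed

lemma join_at_image_second:
  assumes "a < 1" "0 \<le> u" "g ` {u<..<v} \<subseteq> X"
  shows "join_at a f g ` {a + (1 - a) * u<..<a + (1 - a) * v} \<subseteq> X"
proof
  fix z assume "z \<in> join_at a f g ` {a + (1 - a) * u<..<a + (1 - a) * v}"
  then obtain t where t: "a + (1 - a) * u < t" "t < a + (1 - a) * v" "z = join_at a f g t" by auto
  have "0 \<le> (1 - a) * u" using assms(1,2) by simp
  then have "z = g ((t - a) / (1 - a))" using t(1,3) by (simp add: join_at_def)
  moreover have "(t - a) / (1 - a) \<in> {u<..<v}" using t(1,2) assms(1) by (auto simp: field_simps)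
  ultimately show "z \<in> X" using assms(3) by blast
qed

lemma cell_partition_join_at:
  assumes a: "0 < a" "a < 1"
    and F: "cell_partition K f k1 s1 \<sigma>1" and G: "cell_partition K g k2 s2 \<sigma>2"
  shows "cell_partition K (join_at a f g) (k1 + k2)
    (\<lambda>i. if i \<le> k1 then a * s1 i else a + (1 - a) * s2 (i - k1))
    (\<lambda>i. if i \<le> k1 then \<sigma>1 i else \<sigma>2 (i - k1))"
    (is "cell_partition K ?h ?k ?s ?\<sigma>")
proof -
  have F0: "s1 0 = 0" and F1: "s1 k1 = 1" and Fm: "\<forall>i<k1. s1 i < s1 (Suc i)"
    and Fp: "\<forall>i\<in>{1..k1}. \<sigma>1 i \<in> K \<and> \<sigma>1 i \<noteq> {} \<and> f ` {s1 (i - 1)<..<s1 i} \<subseteq> relint_simplex (\<sigma>1 i)"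
    using F unfolding cell_partition_def by blast+
  have G0: "s2 0 = 0" and G1: "s2 k2 = 1" and Gm: "\<forall>i<k2. s2 i < s2 (Suc i)"
    and Gp: "\<forall>i\<in>{1..k2}. \<sigma>2 i \<in> K \<and> \<sigma>2 i \<noteq> {} \<and> g ` {s2 (i - 1)<..<s2 i} \<subseteq> relint_simplex (\<sigma>2 i)"
    using G unfolding cell_partition_def by blast+
  have k2: "k2 > 0" using G0 G1 by (cases k2) auto
  have mono: "?s i < ?s (Suc i)" if "i < ?k" for i
  proof -
    consider "i < k1" | "i = k1" | "i > k1" by linarith
    then show ?thesis
    proof cases
      case 1 then show ?thesis using Fm a by simp
    next
      case 2
      have "s2 0 < s2 (Suc 0)" using Gm k2 by simp
      then show ?thesis using 2 F1 G0 a by simp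
    next
      case 3
      then have "i - k1 < k2" "Suc i - k1 = Suc (i - k1)" using that by auto
      then show ?thesis using 3 Gm a by simp
    qed
  qed
  have piece: "?\<sigma> i \<in> K \<and> ?\<sigma> i \<noteq> {} \<and> ?h ` {?s (i - 1)<..<?s i} \<subseteq> relint_simplex (?\<sigma> i)"
    if i: "i \<in> {1..?k}" for i
  proof (cases "i \<le> k1")
    case True
    then have i1: "i \<in> {1..k1}" and "i - 1 \<le> k1" using i by auto
    moreover have "s1 i \<le> 1" using cell_partition_bounds(2)[OF F True] .
    ultimately show ?thesis using Fp True join_at_image_first[OF a(1), of "s1 i" f "s1 (i - 1)"] by simp
  next
    case False
    define j where "j = i - k1"
    have j: "j \<in> {1..k2}" using i False by (auto simp: j_def)
    have "?s (i - 1) = a + (1 - a) * s2 (j - 1)"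
    proof (cases "i - 1 \<le> k1")
      case True
      then have "i - 1 = k1" "j = 1" using False by (auto simp: j_def)
      then show ?thesis using F1 G0 by simp
    qed (simp add: j_def)
    moreover have "?s i = a + (1 - a) * s2 j" "?\<sigma> i = \<sigma>2 j" using False by (simp_all add: j_def)
    moreover have Gj: "\<sigma>2 j \<in> K \<and> \<sigma>2 j \<noteq> {} \<and> g ` {s2 (j - 1)<..<s2 j} \<subseteq> relint_simplex (\<sigma>2 j)"
      using Gp j by (rule bspec)
    moreover have "0 \<le> s2 (j - 1)" using cell_partition_bounds(1)[OF G, of "j - 1"] j by auto
    then have "?h ` {a + (1 - a) * s2 (j - 1)<..<a + (1 - a) * s2 j} \<subseteq> relint_simplex (\<sigma>2 j)"
      using Gj by (intro join_at_image_second[OF a(2)]) simp_all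
    ultimately show ?thesis by simp
  qed
  have "?s 0 = 0" "?s ?k = 1" using F0 G1 k2 by simp_all
  then show ?thesis unfolding cell_partition_def using mono piece by blast
qed

lemma simplicial_path_join_at:
  assumes "0 < a" "a < 1" "simplicial_path K f" "simplicial_path K g" "f 1 = g 0"
  shows "simplicial_path K (join_at a f g)"
proof -
  obtain k1 s1 \<sigma>1 k2 s2 \<sigma>2 where "cell_partition K f k1 s1 \<sigma>1" "cell_partition K g k2 s2 \<sigma>2"
    using assms(3,4) unfolding simplicial_path_iff_cell_partition by blast
  then have "\<exists>k s \<sigma>. cell_partition K (join_at a f g) k s \<sigma>"
    using cell_partition_join_at[OF assms(1,2)] by blast
  moreover have "path_in (\<Union>K) (join_at a f g)"
    using assms path_in_join_at unfolding simplicial_path_iff_cell_partition by blast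
  ultimately show ?thesis unfolding simplicial_path_iff_cell_partition by blast
qed

section \<open>Cell-invariant sets and the semantics\<close>

definition cell_invariant :: "'a::euclidean_space set set \<Rightarrow> 'a set \<Rightarrow> bool" where
  "cell_invariant K S \<longleftrightarrow> (\<forall>\<sigma>\<in>K. \<forall>x\<in>relint_simplex \<sigma>. \<forall>y\<in>relint_simplex \<sigma>. x \<in> S \<longrightarrow> y \<in> S)"

lemma cell_invariantD:
  "cell_invariant K S \<Longrightarrow> \<sigma> \<in> K \<Longrightarrow> x \<in> relint_simplex \<sigma> \<Longrightarrow> y \<in> relint_simplex \<sigma> \<Longrightarrow> x \<in> S \<Longrightarrow> y \<in> S"
  unfolding cell_invariant_def by blast

lemma cell_invariant_polyhedron: "cell_invariant K (\<Union>K)"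
  unfolding cell_invariant_def using relint_simplex_in_polyhedron by blast

lemma cell_invariant_Union_cells:
  assumes K: "simplicial_complex K" and S: "S \<subseteq> cells K"
  shows "cell_invariant K (\<Union>S)"
  unfolding cell_invariant_def
proof (intro ballI impI)
  fix \<tau> x y assume \<tau>: "\<tau> \<in> K" and x: "x \<in> relint_simplex \<tau>" and y: "y \<in> relint_simplex \<tau>"
    and "x \<in> \<Union>S"
  then obtain c where c: "c \<in> S" "x \<in> c" by blast
  then obtain \<rho> where \<rho>: "\<rho> \<in> K" "c = relint_simplex \<rho>" using S unfolding cells_def by blast
  have "\<rho> = \<tau>" using relint_simplex_unique[OF K \<rho>(1) \<tau>] \<rho>(2) c(2) x by blast
  then show "y \<in> \<Union>S" using c(1) \<rho>(2) y by blast
qed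

lemma cell_invariant_diff:
  "cell_invariant K S \<Longrightarrow> cell_invariant K T \<Longrightarrow> cell_invariant K (S - T)"
  unfolding cell_invariant_def by blast

lemma cell_invariant_Int:
  "cell_invariant K S \<Longrightarrow> cell_invariant K T \<Longrightarrow> cell_invariant K (S \<inter> T)"
  unfolding cell_invariant_def by blast

text \<open>Every point of the cell of \<open>\<rho>\<close> is cell-equivalent to points of that cell arbitrarily
  close to \<open>x\<close>.\<close>

lemma interior_of_cell_invariant_star:
  assumes S: "cell_invariant K S" and \<rho>: "\<rho> \<in> K" "\<tau> \<subseteq> \<rho>"
    and x: "x \<in> relint_simplex \<tau>" "x \<in> top_of_set (\<Union>K) interior_of S"
  shows "relint_simplex \<rho> \<subseteq> S"
proof
  fix q assume q: "q \<in> relint_simplex \<rho>"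
  from x(2) obtain T where T: "openin (top_of_set (\<Union>K)) T" "x \<in> T" "T \<subseteq> S"
    by (auto simp: interior_of_def)
  obtain U where U: "open U" "T = \<Union>K \<inter> U" using T(1) by (auto simp: openin_open)
  obtain e where e: "e > 0" "ball x e \<subseteq> U" using U T(2) open_contains_ball by blast
  define d where "d = norm (q - x)"
  define t where "t = e / (e + d)"
  have d: "d \<ge> 0" by (simp add: d_def)
  have t: "0 < t" "t \<le> 1" using e d by (auto simp: t_def divide_simps)
  define w where "w = (1 - t) *\<^sub>R x + t *\<^sub>R q"
  have "x \<in> \<rho>" using x(1) \<rho>(2) relint_simplex_subset by blast
  then have w: "w \<in> relint_simplex \<rho>" unfolding w_def using relint_simplex_convex_combination q t by blast
  have "x - w = t *\<^sub>R (x - q)" by (simp add: w_def algebra_simps)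
  then have "dist x w = t * d" using t by (simp add: dist_norm d_def norm_minus_commute)
  also have "\<dots> < e" using e d by (simp add: t_def divide_simps)
  finally have "w \<in> U" using e(2) by auto
  then have "w \<in> S" using T(3) U(2) relint_simplex_in_polyhedron[OF \<rho>(1) w] by blast
  then show "q \<in> S" using cell_invariantD[OF S \<rho>(1) w q] by blast
qed

lemma cell_invariant_interior_of:
  assumes K: "simplicial_complex K" and S: "cell_invariant K S"
  shows "cell_invariant K (top_of_set (\<Union>K) interior_of S)"
  unfolding cell_invariant_def
proof (intro ballI impI)
  fix \<tau> x y assume \<tau>: "\<tau> \<in> K" and x: "x \<in> relint_simplex \<tau>" and y: "y \<in> relint_simplex \<tau>"
    and xS: "x \<in> top_of_set (\<Union>K) interior_of S"
  obtain e where e: "e > 0"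
    "\<And>w. w \<in> \<Union>K \<Longrightarrow> dist w y < e \<Longrightarrow> \<exists>\<rho>\<in>K. \<tau> \<subseteq> \<rho> \<and> w \<in> relint_simplex \<rho>"
    using open_star[OF K \<tau> y] by blast
  have "openin (top_of_set (\<Union>K)) (\<Union>K \<inter> ball y e)" by (auto simp: openin_open)
  moreover have "y \<in> \<Union>K \<inter> ball y e" using e(1) relint_simplex_in_polyhedron[OF \<tau> y] by simp
  moreover have "\<Union>K \<inter> ball y e \<subseteq> S"
  proof
    fix w assume "w \<in> \<Union>K \<inter> ball y e"
    then obtain \<rho> where "\<rho> \<in> K" "\<tau> \<subseteq> \<rho>" "w \<in> relint_simplex \<rho>"
      using e(2) by (auto simp: dist_commute)
    then show "w \<in> S" using interior_of_cell_invariant_star[OF S _ _ x xS] by blast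
  qed
  ultimately show "y \<in> top_of_set (\<Union>K) interior_of S" unfolding interior_of_def by blast
qed

text \<open>A path leaving the cell of \<open>\<tau>\<close> immediately enters the cell of some \<open>\<rho> \<supseteq> \<tau>\<close>; every other
  point of the cell of \<open>\<tau>\<close> can be joined to that point by a segment inside the cell of \<open>\<rho>\<close>.\<close>

lemma cell_invariant_reachable:
  assumes K: "simplicial_complex K" and A: "cell_invariant K A"
  shows "cell_invariant K
    {x \<in> \<Union>K. \<exists>\<pi>. path_in (\<Union>K) \<pi> \<and> \<pi> 0 = x \<and> \<pi> ` {0<..<1} \<subseteq> A \<and> \<pi> 1 \<in> B}"
  unfolding cell_invariant_def
proof (intro ballI impI, clarify)
  fix \<tau> x y \<pi> assume \<tau>: "\<tau> \<in> K" and x: "\<pi> 0 \<in> relint_simplex \<tau>" and y: "y \<in> relint_simplex \<tau>"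
    and \<pi>: "path_in (\<Union>K) \<pi>" "\<pi> ` {0<..<1} \<subseteq> A" "\<pi> 1 \<in> B"
  obtain t \<rho> where t: "t \<in> {0<..<1}" and \<rho>: "\<rho> \<in> K" "\<tau> \<subseteq> \<rho>" "\<pi> t \<in> relint_simplex \<rho>"
    using path_enters_star[OF K \<pi>(1) \<tau> x] by blast
  have y\<rho>: "y \<in> \<rho>" and t\<rho>: "\<pi> t \<in> \<rho>" using y \<rho> relint_simplex_subset by blast+
  have tA: "\<pi> t \<in> A" using \<pi>(2) t by blast
  define \<pi>' where "\<pi>' = join_at (1/2) (linepath y (\<pi> t)) (subpath t 1 \<pi>)"
  have "path_in (\<Union>K) (linepath y (\<pi> t))"
    using \<rho>(1) y\<rho> t\<rho> convex_simplex[OF simplicial_complex_simplex[OF K \<rho>(1)]]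
    by (intro path_in_linepath) auto
  moreover have "path_in (\<Union>K) (subpath t 1 \<pi>)" using \<pi>(1) t by (intro path_in_subpath) auto
  ultimately have path: "path_in (\<Union>K) \<pi>'"
    unfolding \<pi>'_def by (intro path_in_join_at) (auto simp: subpath_def linepath_1')
  have ends: "\<pi>' 0 = y" "\<pi>' 1 = \<pi> 1" by (simp_all add: \<pi>'_def linepath_0' subpath_def)
  have lin: "linepath y (\<pi> t) ` {0<..1} \<subseteq> A"
  proof -
    have "linepath y (\<pi> t) ` {0<..<1} \<subseteq> relint_simplex \<rho>"
      using linepath_image_relint_simplex y\<rho> t\<rho> \<rho>(3) by blast
    then have "linepath y (\<pi> t) ` {0<..<1} \<subseteq> A" using cell_invariantD[OF A \<rho>(1) \<rho>(3) _ tA] by blast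
    moreover have "{0<..1} = insert 1 {0<..<1::real}" by auto
    ultimately show ?thesis using tA by (simp add: linepath_1')
  qed
  have "subpath t 1 \<pi> ` {0<..<1} \<subseteq> \<pi> ` {0<..<1}"
    using subpath_image_greaterThanLessThan[of t 1 \<pi>] t by auto
  then have sub: "subpath t 1 \<pi> ` {0<..<1} \<subseteq> A" using \<pi>(2) by blast
  have "\<pi>' ` {0<..<1} \<subseteq> linepath y (\<pi> t) ` {0<..1} \<union> subpath t 1 \<pi> ` {0<..<1}"
    unfolding \<pi>'_def by (rule join_at_image_open) simp_all
  then have "\<pi>' ` {0<..<1} \<subseteq> A" using lin sub by (rule order_trans[OF _ Un_least])
  then show "y \<in> \<Union>K \<and> (\<exists>\<pi>. path_in (\<Union>K) \<pi> \<and> \<pi> 0 = y \<and> \<pi> ` {0<..<1} \<subseteq> A \<and> \<pi> 1 \<in> B)"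
    using path ends \<pi>(3) relint_simplex_in_polyhedron[OF \<tau> y] by metis
qed

lemma cell_invariant_sem:
  assumes M: "polyhedral_model K V"
  shows "cell_invariant K (sem K V \<phi>)"
proof -
  have K: "simplicial_complex K" using M by (simp add: polyhedral_model_def)
  show ?thesis
  proof (induction \<phi>)
    case (Atom p)
    obtain S where "S \<subseteq> cells K" "V p = \<Union>S" using M unfolding polyhedral_model_def by blast
    then show ?case using cell_invariant_Union_cells[OF K] by simp
  next
    case (Box \<phi>)
    then show ?case using cell_invariant_interior_of[OF K] by simp
  next
    case (Gamma \<phi> \<psi>)
    then show ?case using cell_invariant_reachable[OF K] by simp
  qed (simp_all add: cell_invariant_polyhedron cell_invariant_diff cell_invariant_Int)
qed

section \<open>Straightening paths inside cell-invariant sets\<close>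

definition simplices_within :: "'a::euclidean_space set set \<Rightarrow> 'a set \<Rightarrow> 'a set set" where
  "simplices_within K A = {\<rho>\<in>K. \<rho> \<noteq> {} \<and> relint_simplex \<rho> \<subseteq> A}"

definition incidence :: "'a::euclidean_space set set \<Rightarrow> 'a set \<Rightarrow> ('a set \<times> 'a set) set" where
  "incidence K A = {(\<rho>, \<tau>). \<rho> \<in> simplices_within K A \<and> \<tau> \<in> simplices_within K A \<and> (\<rho> \<subseteq> \<tau> \<or> \<tau> \<subseteq> \<rho>)}"

lemma incidence_simplicial_path:
  assumes K: "simplicial_complex K" and uw: "(u, w) \<in> incidence K A"
    and a: "a \<in> relint_simplex u" and c: "c \<in> relint_simplex w"
  shows "\<exists>q. simplicial_path K q \<and> q 0 = a \<and> q 1 = c \<and> q ` {0..1} \<subseteq> A"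
proof -
  have u: "u \<in> simplices_within K A" and w: "w \<in> simplices_within K A" and "u \<subseteq> w \<or> w \<subseteq> u"
    using uw by (auto simp: incidence_def)
  then obtain \<rho> where \<rho>: "\<rho> \<in> simplices_within K A" "a \<in> \<rho>" "c \<in> \<rho>"
    "a \<in> relint_simplex \<rho> \<or> c \<in> relint_simplex \<rho>"
    using a c relint_simplex_subset by blast
  have \<rho>K: "\<rho> \<in> K" and \<rho>A: "relint_simplex \<rho> \<subseteq> A" using \<rho>(1) by (auto simp: simplices_within_def)
  have "linepath a c ` {0<..<1} \<subseteq> A"
    using linepath_image_relint_simplex[OF \<rho>(2-4)] \<rho>A by blast
  moreover have "a \<in> A" "c \<in> A" using a c u w by (auto simp: simplices_within_def)
  moreover have "{0..1} = {0, 1} \<union> {0<..<1::real}" by auto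
  ultimately have "linepath a c ` {0..1} \<subseteq> A" by (simp add: linepath_0' linepath_1')
  then show ?thesis
    using simplicial_path_linepath[OF K \<rho>K \<rho>(2-4)] by (auto simp: linepath_0' linepath_1')
qed

lemma incidence_rtrancl_simplicial_path:
  assumes K: "simplicial_complex K" and R: "(\<rho>0, \<rho>1) \<in> (incidence K A)\<^sup>*"
    and \<rho>1: "\<rho>1 \<in> simplices_within K A"
    and a: "a \<in> relint_simplex \<rho>0" and b: "b \<in> relint_simplex \<rho>1"
  shows "\<exists>q. simplicial_path K q \<and> q 0 = a \<and> q 1 = b \<and> q ` {0..1} \<subseteq> A"
  using R a
proof (induction arbitrary: a rule: converse_rtrancl_induct)
  case base
  have "(\<rho>1, \<rho>1) \<in> incidence K A" using \<rho>1 by (simp add: incidence_def)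
  then show ?case using incidence_simplicial_path[OF K _ base b] by blast
next
  case (step u w)
  have "w \<in> simplices_within K A" using step(1) by (simp add: incidence_def)
  then obtain c where c: "c \<in> relint_simplex w"
    using relint_simplex_nonempty simplicial_complex_simplex[OF K] by (force simp: simplices_within_def)
  obtain q1 where q1: "simplicial_path K q1" "q1 0 = a" "q1 1 = c" "q1 ` {0..1} \<subseteq> A"
    using incidence_simplicial_path[OF K step(1) step(4) c] by blast
  obtain q2 where q2: "simplicial_path K q2" "q2 0 = c" "q2 1 = b" "q2 ` {0..1} \<subseteq> A"
    using step(3) c by blast
  have "join_at (1/2) q1 q2 ` {0..1} \<subseteq> q1 ` {0..1} \<union> q2 ` {0..1}"
    by (rule join_at_image) simp_all
  then have "join_at (1/2) q1 q2 ` {0..1} \<subseteq> A" using q1(4) q2(4) by blast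
  moreover have "simplicial_path K (join_at (1/2) q1 q2)"
    by (rule simplicial_path_join_at) (use q1 q2 in simp_all)
  moreover have "join_at (1/2) q1 q2 0 = a" "join_at (1/2) q1 q2 1 = b" using q1(2) q2(3) by simp_all
  ultimately show ?case by blast
qed

lemma cell_invariant_simplices_within:
  assumes "cell_invariant K A" "\<rho> \<in> K" "x \<in> relint_simplex \<rho>" "x \<in> A"
  shows "\<rho> \<in> simplices_within K A"
  using assms cell_invariantD[OF assms(1,2,3)] relint_simplex_subset
  unfolding simplices_within_def by blast

lemma open_times_in_upward_closed:
  assumes K: "simplicial_complex K" and A: "cell_invariant K A"
    and \<pi>: "path_in (\<Union>K) \<pi>" "\<pi> ` {0<..<1} \<subseteq> A"
    and up: "\<And>\<rho> \<rho>'. \<rho> \<in> R \<Longrightarrow> \<rho>' \<in> simplices_within K A \<Longrightarrow> \<rho> \<subseteq> \<rho>' \<Longrightarrow> \<rho>' \<in> R"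
    and RK: "R \<subseteq> K"
  shows "open {t \<in> {0<..<1}. \<exists>\<rho>\<in>R. \<pi> t \<in> relint_simplex \<rho>}" (is "open ?O")
  unfolding open_dist
proof
  fix t assume "t \<in> ?O"
  then obtain \<rho> where t: "t \<in> {0<..<1}" and \<rho>: "\<rho> \<in> R" "\<pi> t \<in> relint_simplex \<rho>" by blast
  have "t \<in> {0..1}" "\<rho> \<in> K" using t \<rho>(1) RK by auto
  then obtain d where d: "d > 0"
    "\<And>t'. t' \<in> {0..1} \<Longrightarrow> dist t' t < d \<Longrightarrow> \<exists>\<rho>'\<in>K. \<rho> \<subseteq> \<rho>' \<and> \<pi> t' \<in> relint_simplex \<rho>'"
    using path_locally_in_star[OF K \<pi>(1) _ _ \<rho>(2)] by blast
  define e where "e = min d (min t (1 - t))"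
  have "t' \<in> ?O" if "dist t' t < e" for t'
  proof -
    have t': "t' \<in> {0<..<1}" "dist t' t < d" using t that by (auto simp: e_def dist_real_def)
    have "t' \<in> {0..1}" using t'(1) by simp
    then obtain \<rho>' where \<rho>': "\<rho>' \<in> K" "\<rho> \<subseteq> \<rho>'" "\<pi> t' \<in> relint_simplex \<rho>'"
      using d(2) t'(2) by blast
    have "\<pi> t' \<in> A" using \<pi>(2) t'(1) by blast
    then have "\<rho>' \<in> simplices_within K A" using cell_invariant_simplices_within[OF A \<rho>'(1,3)] by blast
    then have "\<rho>' \<in> R" using up[OF \<rho>(1) _ \<rho>'(2)] by blast
    then show ?thesis using t'(1) \<rho>'(3) by blast
  qed
  moreover have "e > 0" using d(1) t by (simp add: e_def)
  ultimately show "\<exists>e>0. \<forall>t'. dist t' t < e \<longrightarrow> t' \<in> ?O" by blast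
qed

lemma incidence_rtrancl_superset_iff:
  assumes "\<rho> \<in> simplices_within K A" "\<rho>' \<in> simplices_within K A" "\<rho> \<subseteq> \<rho>'"
  shows "(\<rho>0, \<rho>') \<in> (incidence K A)\<^sup>* \<longleftrightarrow> (\<rho>0, \<rho>) \<in> (incidence K A)\<^sup>*"
proof -
  have "(\<rho>, \<rho>') \<in> incidence K A" "(\<rho>', \<rho>) \<in> incidence K A" using assms by (auto simp: incidence_def)
  then show ?thesis using rtrancl_into_rtrancl by metis
qed

text \<open>A separation of the incidence graph would disconnect the open interval.\<close>

lemma path_cells_incidence_connected:
  assumes K: "simplicial_complex K" and A: "cell_invariant K A"
    and \<pi>: "path_in (\<Union>K) \<pi>" "\<pi> ` {0<..<1} \<subseteq> A"
    and t0: "t0 \<in> {0<..<1}" "\<rho>0 \<in> K" "\<pi> t0 \<in> relint_simplex \<rho>0"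
    and t1: "t1 \<in> {0<..<1}" "\<rho>1 \<in> K" "\<pi> t1 \<in> relint_simplex \<rho>1"
  shows "(\<rho>0, \<rho>1) \<in> (incidence K A)\<^sup>*"
proof -
  define W where "W = simplices_within K A"
  define R where "R = {\<rho>\<in>W. (\<rho>0, \<rho>) \<in> (incidence K A)\<^sup>*}"
  define O1 where "O1 = {t \<in> {0<..<1}. \<exists>\<rho>\<in>R. \<pi> t \<in> relint_simplex \<rho>}"
  define O2 where "O2 = {t \<in> {0<..<1}. \<exists>\<rho>\<in>W - R. \<pi> t \<in> relint_simplex \<rho>}"
  have WK: "W \<subseteq> K" by (auto simp: W_def simplices_within_def)
  have in_W: "\<rho> \<in> W" if "t \<in> {0<..<1}" "\<rho> \<in> K" "\<pi> t \<in> relint_simplex \<rho>" for t \<rho>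
  proof -
    have "\<pi> t \<in> A" using \<pi>(2) that(1) by blast
    then show ?thesis using cell_invariant_simplices_within[OF A that(2,3)] by (simp add: W_def)
  qed
  have "open O1" unfolding O1_def
  proof (rule open_times_in_upward_closed[OF K A \<pi>])
    fix \<rho> \<rho>' assume "\<rho> \<in> R" "\<rho>' \<in> simplices_within K A" "\<rho> \<subseteq> \<rho>'"
    then show "\<rho>' \<in> R" using incidence_rtrancl_superset_iff[of \<rho> K A \<rho>' \<rho>0] by (simp add: R_def W_def)
  qed (use WK in \<open>auto simp: R_def\<close>)
  moreover have "open O2" unfolding O2_def
  proof (rule open_times_in_upward_closed[OF K A \<pi>])
    fix \<rho> \<rho>' assume "\<rho> \<in> W - R" "\<rho>' \<in> simplices_within K A" "\<rho> \<subseteq> \<rho>'"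
    then show "\<rho>' \<in> W - R" using incidence_rtrancl_superset_iff[of \<rho> K A \<rho>' \<rho>0] by (simp add: R_def W_def)
  qed (use WK in auto)
  moreover have "O1 \<inter> O2 \<inter> {0<..<1} = {}"
  proof -
    have False if "\<rho> \<in> R" "\<rho>' \<in> W - R" "\<pi> t \<in> relint_simplex \<rho>" "\<pi> t \<in> relint_simplex \<rho>'" for t \<rho> \<rho>'
    proof -
      have "\<rho> \<in> K" "\<rho>' \<in> K" using that(1,2) WK by (auto simp: R_def)
      then have "\<rho> = \<rho>'" using relint_simplex_unique[OF K _ _ that(3,4)] by blast
      then show False using that(1,2) by blast
    qed
    then show ?thesis unfolding O1_def O2_def by blast
  qed
  moreover have "{0<..<1} \<subseteq> O1 \<union> O2"
  proof
    fix t :: real assume t: "t \<in> {0<..<1}"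
    then have "t \<in> {0..1}" by simp
    then obtain \<rho> where \<rho>: "\<rho> \<in> K" "\<pi> t \<in> relint_simplex \<rho>"
      using polyhedron_in_relint_simplex[OF K path_in_imp_in[OF \<pi>(1)]] by blast
    then have "\<rho> \<in> W" using in_W t by blast
    then show "t \<in> O1 \<union> O2" using t \<rho>(2) unfolding O1_def O2_def by blast
  qed
  ultimately have split: "O1 \<inter> {0<..<1} = {} \<or> O2 \<inter> {0<..<1} = {}"
    by (intro connectedD[OF connected_Ioo])
  have "\<rho>0 \<in> R" using in_W[OF t0] by (simp add: R_def)
  then have "t0 \<in> O1" using t0(1,3) by (auto simp: O1_def)
  then have "t1 \<notin> O2" using split t0(1) t1(1) by blast
  moreover have "\<rho>1 \<in> W" using in_W[OF t1] .
  ultimately show ?thesis using t1(1,3) by (auto simp: O2_def R_def)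
qed

lemma simplicial_path_join_at_within:
  assumes "simplicial_path K f" "simplicial_path K g" "f 1 = g 0"
    and "f ` {0<..1} \<subseteq> A" "g ` {0<..<1} \<subseteq> A"
  shows "simplicial_path K (join_at (1/2) f g)" "join_at (1/2) f g ` {0<..<1} \<subseteq> A"
proof -
  show "simplicial_path K (join_at (1/2) f g)"
    by (rule simplicial_path_join_at) (use assms in simp_all)
  have "join_at (1/2) f g ` {0<..<1} \<subseteq> f ` {0<..1} \<union> g ` {0<..<1}"
    by (rule join_at_image_open) simp_all
  then show "join_at (1/2) f g ` {0<..<1} \<subseteq> A" using assms(4,5) by blast
qed

text \<open>Short segments into the open stars of the end points, and in between a chain of segments
  along the incidence graph of the simplices whose cells the path visits.\<close>

lemma simplicial_path_within:
  assumes K: "simplicial_complex K" and A: "cell_invariant K A"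
    and \<pi>: "path_in (\<Union>K) \<pi>" "\<pi> ` {0<..<1} \<subseteq> A"
  obtains q where "simplicial_path K q" "q 0 = \<pi> 0" "q 1 = \<pi> 1" "q ` {0<..<1} \<subseteq> A"
proof -
  obtain t0 \<rho>0 t1 \<rho>1 where t0: "t0 \<in> {0<..<1}" and \<rho>0: "\<rho>0 \<in> K" "\<pi> 0 \<in> \<rho>0" "\<pi> t0 \<in> relint_simplex \<rho>0"
    and t1: "t1 \<in> {0<..<1}" and \<rho>1: "\<rho>1 \<in> K" "\<pi> 1 \<in> \<rho>1" "\<pi> t1 \<in> relint_simplex \<rho>1"
    by (rule path_ends_in_stars[OF K \<pi>(1)])
  have "\<pi> t0 \<in> A" "\<pi> t1 \<in> A" using \<pi>(2) t0 t1 by blast+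
  then have "\<rho>0 \<in> simplices_within K A" and \<rho>1W: "\<rho>1 \<in> simplices_within K A"
    using cell_invariant_simplices_within[OF A] \<rho>0(1,3) \<rho>1(1) \<rho>1(3) by blast+
  then have \<rho>0A: "relint_simplex \<rho>0 \<subseteq> A" by (simp add: simplices_within_def)
  have "(\<rho>0, \<rho>1) \<in> (incidence K A)\<^sup>*"
    using path_cells_incidence_connected[OF K A \<pi> t0 \<rho>0(1,3) t1 \<rho>1(1) \<rho>1(3)] .
  then obtain mid where mid: "simplicial_path K mid" "mid 0 = \<pi> t0" "mid 1 = \<pi> t1"
    "mid ` {0..1} \<subseteq> A"
    using incidence_rtrancl_simplicial_path[OF K _ \<rho>1W \<rho>0(3) \<rho>1(3)] by blast
  define s0 where "s0 = linepath (\<pi> 0) (\<pi> t0)"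
  define s1 where "s1 = linepath (\<pi> t1) (\<pi> 1)"
  have in\<rho>: "\<pi> 0 \<in> \<rho>0" "\<pi> t0 \<in> \<rho>0" "\<pi> t1 \<in> \<rho>1" "\<pi> 1 \<in> \<rho>1"
    using \<rho>0(2,3) \<rho>1(2,3) relint_simplex_subset by blast+
  have s0: "simplicial_path K s0" "s0 ` {0<..<1} \<subseteq> relint_simplex \<rho>0"
    unfolding s0_def using simplicial_path_linepath[OF K \<rho>0(1)] linepath_image_relint_simplex
      in\<rho>(1,2) \<rho>0(3) by blast+
  have s1: "simplicial_path K s1" "s1 ` {0<..<1} \<subseteq> relint_simplex \<rho>1"
    unfolding s1_def using simplicial_path_linepath[OF K \<rho>1(1)] linepath_image_relint_simplex
      in\<rho>(3,4) \<rho>1(3) by blast+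
  have "{0<..1} = insert 1 {0<..<1::real}" by auto
  then have s0A: "s0 ` {0<..1} \<subseteq> A" and midA: "mid ` {0<..1} \<subseteq> A"
    using s0(2) \<rho>0A \<rho>0(3) mid(4) by (auto simp: s0_def linepath_1')
  have s1A: "s1 ` {0<..<1} \<subseteq> A" using s1(2) \<rho>1W by (auto simp: simplices_within_def)
  define inner where "inner = join_at (1/2) mid s1"
  have "mid 1 = s1 0" using mid(3) by (simp add: s1_def linepath_0')
  then have inner: "simplicial_path K inner" "inner ` {0<..<1} \<subseteq> A"
    unfolding inner_def using simplicial_path_join_at_within[OF mid(1) s1(1) _ midA s1A] by blast+
  have "s0 1 = inner 0" using mid(2) by (simp add: s0_def inner_def linepath_1')
  then have "simplicial_path K (join_at (1/2) s0 inner)" "join_at (1/2) s0 inner ` {0<..<1} \<subseteq> A"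
    using simplicial_path_join_at_within[OF s0(1) inner(1) _ s0A inner(2)] by blast+
  moreover have "join_at (1/2) s0 inner 0 = \<pi> 0" "join_at (1/2) s0 inner 1 = \<pi> 1"
    by (simp_all add: s0_def s1_def inner_def linepath_0' linepath_1')
  ultimately show ?thesis using that by blast
qed

section \<open>Characteristic formulas and the bisimulation\<close>

lemma logeq_sym: "logeq K V x y \<Longrightarrow> logeq K V y x"
  unfolding logeq_def by blast

lemma logeq_trans: "logeq K V x y \<Longrightarrow> logeq K V y z \<Longrightarrow> logeq K V x z"
  unfolding logeq_def by blast

lemma logeq_refl: "x \<in> \<Union>K \<Longrightarrow> logeq K V x x"
  unfolding logeq_def by blast

lemma logeq_same_cell:
  assumes "polyhedral_model K V" "\<tau> \<in> K" "x \<in> relint_simplex \<tau>" "y \<in> relint_simplex \<tau>"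
  shows "logeq K V x y"
  unfolding logeq_def
  using relint_simplex_in_polyhedron[OF assms(2)] assms(3,4)
    cell_invariantD[OF cell_invariant_sem[OF assms(1)] assms(2)] by blast

fun conj_list :: "'p slcs list \<Rightarrow> 'p slcs" where
  "conj_list [] = Top"
| "conj_list (\<phi> # \<phi>s) = And \<phi> (conj_list \<phi>s)"

lemma sem_conj_list: "sem K V (conj_list \<phi>s) = \<Union>K \<inter> (\<Inter>\<phi>\<in>set \<phi>s. sem K V \<phi>)"
  by (induction \<phi>s) auto

definition separating_formula :: "'a::euclidean_space set set \<Rightarrow> ('p \<Rightarrow> 'a set) \<Rightarrow> 'a \<Rightarrow> 'a set \<Rightarrow> 'p slcs" where
  "separating_formula K V z c = (if \<exists>\<phi>. z \<in> sem K V \<phi> \<and> c \<inter> sem K V \<phi> = {}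
     then SOME \<phi>. z \<in> sem K V \<phi> \<and> c \<inter> sem K V \<phi> = {} else Top)"

text \<open>Since every formula is a union of the finitely many cells, conjoining one separating formula
  per cell yields a formula defining the logical equivalence class of \<open>z\<close>.\<close>

definition characteristic_formula :: "'a::euclidean_space set set \<Rightarrow> ('p \<Rightarrow> 'a set) \<Rightarrow> 'a \<Rightarrow> 'p slcs" where
  "characteristic_formula K V z = conj_list (map (separating_formula K V z) (SOME cs. set cs = cells K))"

lemma sem_separating_formula:
  assumes "z \<in> \<Union>K"
  shows "z \<in> sem K V (separating_formula K V z c)"
    and "\<exists>\<phi>. z \<in> sem K V \<phi> \<and> c \<inter> sem K V \<phi> = {} \<Longrightarrow> c \<inter> sem K V (separating_formula K V z c) = {}"
proof -
  let ?P = "\<lambda>\<phi>. z \<in> sem K V \<phi> \<and> c \<inter> sem K V \<phi> = {}"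
  show "z \<in> sem K V (separating_formula K V z c)"
  proof (cases "Ex ?P")
    case True
    then show ?thesis using someI_ex[OF True] by (simp add: separating_formula_def)
  next
    case False
    then have "separating_formula K V z c = Top" unfolding separating_formula_def by (rule if_not_P)
    then show ?thesis using assms by simp
  qed
  show "c \<inter> sem K V (separating_formula K V z c) = {}" if "Ex ?P"
    using someI_ex[OF that] that by (simp add: separating_formula_def)
qed

lemma set_list_of_cells:
  assumes "simplicial_complex K"
  shows "set (SOME cs. set cs = cells K) = cells K"
proof -
  have "cells K = relint_simplex ` {\<sigma>\<in>K. \<sigma> \<noteq> {}}" unfolding cells_def by blast
  then have "finite (cells K)" using assms by (simp add: simplicial_complex_def)
  then have "\<exists>cs. set cs = cells K" by (rule finite_list)
  then show ?thesis by (rule someI_ex)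
qed

lemma sem_characteristic_formula:
  assumes M: "polyhedral_model K V" and z: "z \<in> \<Union>K"
  shows "w \<in> sem K V (characteristic_formula K V z) \<longleftrightarrow> logeq K V w z"
proof -
  have K: "simplicial_complex K" using M by (simp add: polyhedral_model_def)
  have char: "w \<in> sem K V (characteristic_formula K V z) \<longleftrightarrow>
      w \<in> \<Union>K \<and> (\<forall>c\<in>cells K. w \<in> sem K V (separating_formula K V z c))"
    unfolding characteristic_formula_def sem_conj_list using set_list_of_cells[OF K] by auto
  show ?thesis
  proof
    assume w: "w \<in> sem K V (characteristic_formula K V z)"
    then have wK: "w \<in> \<Union>K" using char by blast
    then obtain \<rho> where \<rho>: "\<rho> \<in> K" "\<rho> \<noteq> {}" "w \<in> relint_simplex \<rho>"
      using polyhedron_in_relint_simplex[OF K] by blast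
    then have "relint_simplex \<rho> \<in> cells K" unfolding cells_def by blast
    then have no_sep: "\<not> (\<exists>\<phi>. z \<in> sem K V \<phi> \<and> relint_simplex \<rho> \<inter> sem K V \<phi> = {})"
      using sem_separating_formula(2)[OF z] w \<rho>(3) char by blast
    have "w \<in> sem K V \<phi>" if "z \<in> sem K V \<phi>" for \<phi>
      using no_sep that cell_invariantD[OF cell_invariant_sem[OF M] \<rho>(1) _ \<rho>(3)] by blast
    then have "z \<in> sem K V \<phi> \<longleftrightarrow> w \<in> sem K V \<phi>" for \<phi>
      using z wK by (metis Diff_iff sem.simps(3))
    then show "logeq K V w z" unfolding logeq_def using wK z by blast
  next
    assume "logeq K V w z"
    then show "w \<in> sem K V (characteristic_formula K V z)"
      using char sem_separating_formula(1)[OF z] unfolding logeq_def by blast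
  qed
qed

text \<open>The formula \<open>\<gamma>(\<chi>(c), \<chi>(p 1))\<close>, with \<open>c\<close> a point of the open piece, holds at \<open>x\<close> and hence at
  \<open>y\<close>; the witnessing path is then made simplicial inside the class of \<open>c\<close>.\<close>

lemma logeq_lift_cell_path:
  assumes M: "polyhedral_model K V" and xy: "logeq K V x y"
    and p: "path_in (\<Union>K) p" "p 0 = x" and \<sigma>: "\<sigma> \<in> K" "p ` {0<..<1} \<subseteq> relint_simplex \<sigma>"
  obtains q where "simplicial_path K q" "q 0 = y" "\<forall>t\<in>{0..1}. logeq K V (p t) (q t)"
proof -
  have K: "simplicial_complex K" using M by (simp add: polyhedral_model_def)
  define c where "c = p (1/2)"
  have c: "c \<in> relint_simplex \<sigma>" using \<sigma>(2) unfolding c_def by auto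
  have cK: "c \<in> \<Union>K" using relint_simplex_in_polyhedron[OF \<sigma>(1) c] .
  have p1K: "p 1 \<in> \<Union>K" using path_in_imp_in[OF p(1)] by simp
  have pc: "logeq K V (p t) c" if "t \<in> {0<..<1}" for t
    using logeq_same_cell[OF M \<sigma>(1) _ c] \<sigma>(2) that by blast
  define \<chi>c where "\<chi>c = characteristic_formula K V c"
  define \<chi>1 where "\<chi>1 = characteristic_formula K V (p 1)"
  have "p ` {0<..<1} \<subseteq> sem K V \<chi>c" using pc sem_characteristic_formula[OF M cK] by (auto simp: \<chi>c_def)
  moreover have "p 1 \<in> sem K V \<chi>1"
    using sem_characteristic_formula[OF M p1K] logeq_refl[OF p1K] by (simp add: \<chi>1_def)
  moreover have "x \<in> \<Union>K" using xy unfolding logeq_def by blast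
  ultimately have "x \<in> sem K V (Gamma \<chi>c \<chi>1)" using p by auto
  then have "y \<in> sem K V (Gamma \<chi>c \<chi>1)" using xy unfolding logeq_def by blast
  then obtain q0 where q0: "path_in (\<Union>K) q0" "q0 0 = y" "q0 ` {0<..<1} \<subseteq> sem K V \<chi>c"
    "q0 1 \<in> sem K V \<chi>1" by auto
  obtain q where q: "simplicial_path K q" "q 0 = y" "q 1 = q0 1" "q ` {0<..<1} \<subseteq> sem K V \<chi>c"
    using simplicial_path_within[OF K cell_invariant_sem[OF M] q0(1,3)] q0(2) by metis
  have "logeq K V (p t) (q t)" if t: "t \<in> {0..1}" for t
  proof -
    consider "t = 0" | "t = 1" | "t \<in> {0<..<1}" using t by fastforce
    then show ?thesis
    proof cases
      case 1 then show ?thesis using p(2) q(2) xy by simp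
    next
      case 2
      have "logeq K V (q 1) (p 1)" using q(3) q0(4) sem_characteristic_formula[OF M p1K] \<chi>1_def by simp
      then show ?thesis using 2 logeq_sym by blast
    next
      case 3
      then have "logeq K V (q t) c" using q(4) sem_characteristic_formula[OF M cK] \<chi>c_def by blast
      then show ?thesis using pc[OF 3] logeq_sym logeq_trans by metis
    qed
  qed
  then show ?thesis using that q(1,2) by blast
qed

lemma logeq_lift_cell_partition:
  assumes M: "polyhedral_model K V"
  shows "cell_partition K \<pi> k s \<sigma> \<Longrightarrow> path_in (\<Union>K) \<pi> \<Longrightarrow> logeq K V (\<pi> 0) y \<Longrightarrow>
    \<exists>\<pi>'. simplicial_path K \<pi>' \<and> \<pi>' 0 = y \<and> (\<forall>t\<in>{0..1}. logeq K V (\<pi> t) (\<pi>' t))"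
proof (induction k arbitrary: \<pi> s \<sigma> y)
  case 0
  then show ?case unfolding cell_partition_def by linarith
next
  case (Suc k)
  define a where "a = s 1"
  have a: "0 < a" "a \<le> 1" "\<sigma> 1 \<in> K" "\<pi> ` {0<..<a} \<subseteq> relint_simplex (\<sigma> 1)"
    using cell_partition_first_piece[OF Suc.prems(1)] by (simp_all add: a_def)
  define p where "p = subpath 0 a \<pi>"
  have "p ` {0<..<1} \<subseteq> relint_simplex (\<sigma> 1)"
    using subpath_image_greaterThanLessThan[of 0 a \<pi>] a unfolding p_def by auto
  moreover have "path_in (\<Union>K) p" using Suc.prems(2) a unfolding p_def by (intro path_in_subpath) auto
  moreover have "logeq K V (p 0) y" using Suc.prems(3) by (simp add: p_def subpath_def)
  ultimately obtain q where q: "simplicial_path K q" "q 0 = y" "\<forall>t\<in>{0..1}. logeq K V (p t) (q t)"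
    using logeq_lift_cell_path[OF M _ _ refl a(3)] by blast
  show ?case
  proof (cases "k = 0")
    case True
    then have "a = 1" using Suc.prems(1) by (simp add: a_def cell_partition_def)
    then show ?thesis using q by (auto simp: p_def)
  next
    case False
    then have a1: "a < 1"
      and R: "cell_partition K (subpath a 1 \<pi>) k (\<lambda>i. (s (Suc i) - a) / (1 - a)) (\<lambda>i. \<sigma> (Suc i))"
      using cell_partition_tail[OF Suc.prems(1)] by (simp_all add: a_def)
    have "logeq K V (p 1) (q 1)" using q(3) by simp
    then have "logeq K V (subpath a 1 \<pi> 0) (q 1)" by (simp add: p_def subpath_def)
    moreover have "path_in (\<Union>K) (subpath a 1 \<pi>)" using Suc.prems(2) a by (intro path_in_subpath) auto
    ultimately obtain r where r: "simplicial_path K r" "r 0 = q 1"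
      "\<forall>t\<in>{0..1}. logeq K V (subpath a 1 \<pi> t) (r t)"
      using Suc.IH[OF R] by blast
    have "simplicial_path K (join_at a q r)" using a a1 q(1) r(1,2) by (intro simplicial_path_join_at) auto
    moreover have "join_at a q r 0 = y" using a q(2) by simp
    moreover have "\<forall>t\<in>{0..1}. logeq K V (\<pi> t) (join_at a q r t)"
      using join_at_rel[where R = "logeq K V", OF a(1) a1 q(3) r(3)] join_at_subpaths[OF a(1) a1, of \<pi>]
      by (simp add: p_def)
    ultimately show ?thesis by blast
  qed
qed

lemma logeq_lift_simplicial_path:
  assumes "polyhedral_model K V" "logeq K V x y" "simplicial_path K \<pi>" "\<pi> 0 = x"
  shows "\<exists>\<pi>'. simplicial_path K \<pi>' \<and> \<pi>' 0 = y \<and> (\<forall>t\<in>{0..1}. logeq K V (\<pi> t) (\<pi>' t))"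
  using assms logeq_lift_cell_partition[OF assms(1)] unfolding simplicial_path_iff_cell_partition by blast

theorem mainTheorem13:
  fixes K :: "'a::euclidean_space set set" and V :: "'p::finite \<Rightarrow> 'a set"
  assumes "polyhedral_model K V"
  shows "simplicial_bisimulation K V (logeq K V)"
  unfolding simplicial_bisimulation_def
proof (intro conjI allI impI)
  fix x y assume "logeq K V x y"
  then show "x \<in> \<Union>K" "y \<in> \<Union>K" unfolding logeq_def by blast+
next
  fix x y p assume "logeq K V x y"
  then have "x \<in> sem K V (Atom p) \<longleftrightarrow> y \<in> sem K V (Atom p)" unfolding logeq_def by blast
  then show "x \<in> V p \<longleftrightarrow> y \<in> V p" by simp
next
  fix x y \<pi>x assume "logeq K V x y" "simplicial_path K \<pi>x \<and> \<pi>x 0 = x"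
  then show "\<exists>\<pi>y. simplicial_path K \<pi>y \<and> \<pi>y 0 = y \<and> (\<forall>t\<in>{0..1}. logeq K V (\<pi>x t) (\<pi>y t))"
    using logeq_lift_simplicial_path[OF assms] by blast
next
  fix x y \<pi>y assume "logeq K V x y" "simplicial_path K \<pi>y \<and> \<pi>y 0 = y"
  then obtain \<pi>x where "simplicial_path K \<pi>x" "\<pi>x 0 = x" "\<forall>t\<in>{0..1}. logeq K V (\<pi>y t) (\<pi>x t)"
    using logeq_lift_simplicial_path[OF assms logeq_sym] by blast
  then show "\<exists>\<pi>x. simplicial_path K \<pi>x \<and> \<pi>x 0 = x \<and> (\<forall>t\<in>{0..1}. logeq K V (\<pi>x t) (\<pi>y t))"
    using logeq_sym by blast
qed

end
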